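(* Let $n\ge1$ and let $(A_1,A_2,A_3,A_4)$ be distinct nonempty subsets of $[n]$ with $\chi_{A_1}+\chi_{A_3}=\chi_{A_2}+\chi_{A_4}$ and $A_i\cap A_j\ne\emptyset$ for $1\le i<j\le 3$, where $A_4$ is the largest of the four in the binary order. Define $M=\bigcap_{i=1}^4A_i$ and $S_i=(A_i\cap A_{i+1})\setminus M$ for $1\le i\le 4$ (indices mod 4). Then $(S_1,S_2,S_3,S_4,M)$ is a side-midpoint tuple, i.e.: (S1) $S_i\cap S_j=\emptyset$ for all $i\ne j$; (S2) $M\cap S_i=\emptyset$ for all $i$; (S3) $M\ne\emptyset$; (S4) of each pair of opposite sides $\{S_1,S_3\}$, $\{S_2,S_4\}$, at most one is empty.
   Context: $\chi_A\in\{0,1\}^n$ denotes the characteristic vector of $A\subseteq[n]$. Binary order: a subset $I\subseteq[n]$ is encoded by $\sum_{j\in I}2^j$ and subsets are linearly ordered by this number. Indices of $A_i$ and $S_i$ are taken cyclically mod 4 ($A_5=A_1$, $S_0=S_4$). A side-midpoint tuple in $[n]$ is a tuple $(S_1,S_2,S_3,S_4,M)$ of subsets of $[n]$ satisfying (S1)–(S4). *)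

theory Defs
  imports Main
begin

definition ground :: "nat \<Rightarrow> nat set" where
  "ground n = {1..n}"

definition chi :: "nat set \<Rightarrow> nat \<Rightarrow> nat" where
  "chi A j = (if j \<in> A then 1 else 0)"

definition bin_code :: "nat set \<Rightarrow> nat" where
  "bin_code I = (\<Sum>j\<in>I. 2 ^ j)"

definition side_midpoint_tuple ::
  "nat \<Rightarrow> nat set \<Rightarrow> nat set \<Rightarrow> nat set \<Rightarrow> nat set \<Rightarrow> nat set \<Rightarrow> bool" where
  "side_midpoint_tuple n S1 S2 S3 S4 M \<longleftrightarrow>
     (let S = (\<lambda>i::nat. if i = 1 then S1 else if i = 2 then S2 else if i = 3 then S3 else S4) in
       (\<forall>i\<in>{1..4}. S i \<subseteq> ground n) \<and> M \<subseteq> ground n \<and>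
       (\<forall>i\<in>{1..4}. \<forall>j\<in>{1..4}. i \<noteq> j \<longrightarrow> S i \<inter> S j = {}) \<and>
       (\<forall>i\<in>{1..4}. M \<inter> S i = {}) \<and>
       M \<noteq> {} \<and>
       \<not> (S1 = {} \<and> S3 = {}) \<and> \<not> (S2 = {} \<and> S4 = {}))"

end

theory Submission
  imports Defs
begin

text \<open>Since characteristic vectors take values in {0,1}, the identity
  \<open>\<chi>\<^sub>A\<^sub>1 + \<chi>\<^sub>A\<^sub>3 = \<chi>\<^sub>A\<^sub>2 + \<chi>\<^sub>A\<^sub>4\<close> says exactly that the two diagonals of the quadrilateral
  \<open>A\<^sub>1A\<^sub>2A\<^sub>3A\<^sub>4\<close> have the same intersection and the same union. Hence an element lying in
  three of the sets lies in all four, which makes the sides pairwise disjoint and disjoint from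
  \<open>M\<close>; moreover \<open>M = A\<^sub>1 \<inter> A\<^sub>3 \<noteq> {}\<close>. If two opposite sides were both empty, the two
  sets between them would coincide.\<close>

definition balanced :: "nat set \<Rightarrow> nat set \<Rightarrow> nat set \<Rightarrow> nat set \<Rightarrow> bool" where
  "balanced A1 A2 A3 A4 \<longleftrightarrow> (\<forall>j. chi A1 j + chi A3 j = chi A2 j + chi A4 j)"

lemma balanced_iff_diagonals:
  "balanced A1 A2 A3 A4 \<longleftrightarrow> A1 \<inter> A3 = A2 \<inter> A4 \<and> A1 \<union> A3 = A2 \<union> A4"
  unfolding balanced_def chi_def by (auto split: if_splits)

lemma balanced_if_balanced_on_ground:
  assumes "A1 \<subseteq> ground n" "A2 \<subseteq> ground n" "A3 \<subseteq> ground n" "A4 \<subseteq> ground n"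
    and "\<forall>j\<in>ground n. chi A1 j + chi A3 j = chi A2 j + chi A4 j"
  shows "balanced A1 A2 A3 A4"
  unfolding balanced_def
proof
  fix j
  show "chi A1 j + chi A3 j = chi A2 j + chi A4 j"
  proof (cases "j \<in> ground n")
    case False
    with assms(1-4) show ?thesis by (auto simp: chi_def)
  qed (use assms(5) in blast)
qed

lemma balanced_rotate: "balanced A1 A2 A3 A4 \<Longrightarrow> balanced A2 A3 A4 A1"
  unfolding balanced_def by (simp add: add.commute)

lemma balanced_Int_all_eq_diagonal:
  "balanced A1 A2 A3 A4 \<Longrightarrow> A1 \<inter> A2 \<inter> A3 \<inter> A4 = A1 \<inter> A3"
  by (auto simp: balanced_iff_diagonals)

lemma balanced_opposite_sides_empty_imp_eq:
  assumes "balanced A1 A2 A3 A4" and "A1 \<inter> A2 \<subseteq> A3" and "A3 \<inter> A4 \<subseteq> A1"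
  shows "A2 = A3"
  using assms unfolding balanced_iff_diagonals by blast

theorem proposition7p6:
  fixes n :: nat and A1 A2 A3 A4 :: "nat set"
  assumes "n \<ge> 1"
    and "A1 \<subseteq> ground n" "A2 \<subseteq> ground n" "A3 \<subseteq> ground n" "A4 \<subseteq> ground n"
    and "A1 \<noteq> {}" "A2 \<noteq> {}" "A3 \<noteq> {}" "A4 \<noteq> {}"
    and "distinct [A1, A2, A3, A4]"
    and "\<forall>j\<in>ground n. chi A1 j + chi A3 j = chi A2 j + chi A4 j"
    and "A1 \<inter> A2 \<noteq> {}" "A1 \<inter> A3 \<noteq> {}" "A2 \<inter> A3 \<noteq> {}"
    and "bin_code A1 \<le> bin_code A4" "bin_code A2 \<le> bin_code A4" "bin_code A3 \<le> bin_code A4"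
  shows "side_midpoint_tuple n
           ((A1 \<inter> A2) - (A1 \<inter> A2 \<inter> A3 \<inter> A4))
           ((A2 \<inter> A3) - (A1 \<inter> A2 \<inter> A3 \<inter> A4))
           ((A3 \<inter> A4) - (A1 \<inter> A2 \<inter> A3 \<inter> A4))
           ((A4 \<inter> A1) - (A1 \<inter> A2 \<inter> A3 \<inter> A4))
           (A1 \<inter> A2 \<inter> A3 \<inter> A4)"
proof -
  have bal: "balanced A1 A2 A3 A4"
    using balanced_if_balanced_on_ground assms(2-5,11) by blast
  then have bal': "balanced A2 A3 A4 A1"
    by (rule balanced_rotate)
  have diagonals: "A1 \<inter> A3 = A2 \<inter> A4" "A1 \<union> A3 = A2 \<union> A4"
    using bal by (simp_all add: balanced_iff_diagonals)
  have midpoint: "A1 \<inter> A2 \<inter> A3 \<inter> A4 \<noteq> {}"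
    using balanced_Int_all_eq_diagonal[OF bal] assms(13) by simp
  have opposite13: "\<not> (A1 \<inter> A2 \<subseteq> A3 \<and> A3 \<inter> A4 \<subseteq> A1)"
    using balanced_opposite_sides_empty_imp_eq[OF bal] assms(10) by auto
  have opposite24: "\<not> (A2 \<inter> A3 \<subseteq> A4 \<and> A4 \<inter> A1 \<subseteq> A2)"
    using balanced_opposite_sides_empty_imp_eq[OF bal'] assms(10) by auto
  have four: "{1..4::nat} = {1, 2, 3, 4}" by auto
  show ?thesis
    unfolding side_midpoint_tuple_def Let_def four
    using assms(2-5) diagonals midpoint opposite13 opposite24 by auto
qed

end
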